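(* Let $(d,p)\in\{(6,1),(10,2),(13,3),(14,3),(17,4)\}$. Then the function $\varphi$ has a unique maximum on $K$, and it is attained at the point $\mathbf{z}^*$, which lies in the interior of $K$.
   Context: Let $\tau_j=\binom{d}{p}\binom{p}{j}\binom{d-p}{p-j}$ for $0\le j\le p$. Points of $\mathbb{R}^{4p+1}$ are written $\mathbf{z}=(z,(z_{j00},z_{j01},z_{j10},z_{j11})_{j\in[p]})$, and we set $z_{0\alpha\alpha}=z-\sum_{j\in[p]}z_{j\alpha\alpha}$ for $\alpha\in\{0,1\}$ and $z_{0\alpha\beta}=\frac12-z-\sum_{j\in[p]}z_{j\alpha\beta}$ for $\alpha\ne\beta$. Let $K\subset\mathbb{R}^{4p+1}$ be the set of $\mathbf{z}$ with $0\le z\le\frac12$ and $z_{j\alpha\beta}\ge0$ for all $0\le j\le p$, $\alpha,\beta\in\{0,1\}$. Define $A(\mathbf{z})=p+(d-4p)z+\sum_{j\in[p]}j(z_{j00}+z_{j11}-z_{j01}-z_{j10})$, $B(\mathbf{z})=\frac d2-A(\mathbf{z})$, and $$\varphi(\mathbf{z})=A\log A+B\log B+\sum_{\substack{0\le j\le p\\ \alpha,\beta\in\{0,1\}}}\bigl(z_{j\alpha\beta}\log\tau_j-z_{j\alpha\beta}\log z_{j\alpha\beta}\bigr),$$ with the convention $0\log0=0$ (so $\varphi$ is continuous on $K$). The point $\mathbf{z}^*$ has $z^*=\frac14$ and $z^*_{j\alpha\beta}=\frac{\tau_j}{4\binom{d}{p}^2}$ for all $j\in[p]$, $\alpha,\beta\in\{0,1\}$.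 *)

theory Defs
  imports "HOL-Analysis.Analysis"
begin

text \<open>A point of R^(4p+1) is a pair (z, w) with w j a b = z_{j a b} for j in {1..p},
  a, b :: bool (False = 0, True = 1), and w j a b = 0 for j outside {1..p}.\<close>

type_synonym pt = "real \<times> (nat \<Rightarrow> bool \<Rightarrow> bool \<Rightarrow> real)"

definition pts :: "nat \<Rightarrow> pt set" where
  "pts p = {(z, w). \<forall>j a b. j \<notin> {1..p} \<longrightarrow> w j a b = 0}"

definition tau :: "nat \<Rightarrow> nat \<Rightarrow> nat \<Rightarrow> real" where
  "tau d p j = real ((d choose p) * (p choose j) * ((d - p) choose (p - j)))"

definition zc :: "nat \<Rightarrow> pt \<Rightarrow> nat \<Rightarrow> bool \<Rightarrow> bool \<Rightarrow> real" where
  "zc p x j a b =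
     (if j = 0 then
        (if a = b then fst x - (\<Sum>i\<in>{1..p}. snd x i a b)
         else 1/2 - fst x - (\<Sum>i\<in>{1..p}. snd x i a b))
      else snd x j a b)"

definition Kset :: "nat \<Rightarrow> pt set" where
  "Kset p = {x \<in> pts p. 0 \<le> fst x \<and> fst x \<le> 1/2 \<and>
              (\<forall>j\<in>{0..p}. \<forall>a b. 0 \<le> zc p x j a b)}"

definition xlogx :: "real \<Rightarrow> real" where
  "xlogx t = (if t = 0 then 0 else t * ln t)"

definition Af :: "nat \<Rightarrow> nat \<Rightarrow> pt \<Rightarrow> real" where
  "Af d p x = real p + (real d - 4 * real p) * fst x +
     (\<Sum>j\<in>{1..p}. real j * (snd x j False False + snd x j True True
                              - snd x j False True - snd x j True False))"

definition Bf :: "nat \<Rightarrow> nat \<Rightarrow> pt \<Rightarrow> real" where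
  "Bf d p x = real d / 2 - Af d p x"

definition phi :: "nat \<Rightarrow> nat \<Rightarrow> pt \<Rightarrow> real" where
  "phi d p x = xlogx (Af d p x) + xlogx (Bf d p x) +
     (\<Sum>j\<in>{0..p}. \<Sum>a\<in>UNIV. \<Sum>b\<in>UNIV.
        zc p x j a b * ln (tau d p j) - xlogx (zc p x j a b))"

definition zstar :: "nat \<Rightarrow> nat \<Rightarrow> pt" where
  "zstar d p = (1/4, \<lambda>j a b. if j \<in> {1..p}
                  then tau d p j / (4 * real (d choose p) ^ 2) else 0)"

text \<open>Interior of S within R^(4p+1) (coordinates z and z_{j a b}, j in 1..p),
  via (sup-norm) open balls.\<close>
definition interior_pt :: "nat \<Rightarrow> pt set \<Rightarrow> pt set" where
  "interior_pt p S = {x \<in> pts p. \<exists>e>0. \<forall>y\<in>pts p.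
      (\<bar>fst y - fst x\<bar> < e \<and> (\<forall>j\<in>{1..p}. \<forall>a b. \<bar>snd y j a b - snd x j a b\<bar> < e))
      \<longrightarrow> y \<in> S}"

end

theory Submission
  imports Defs
begin

(* The coordinates z_{jab} (0 <= j <= p) of a point of K form a probability vector, and
   A = sum c_{jab} z_{jab} with c_{jaa} = j + d/2 - p and c_{jab} = p - j for a ~= b.
   Gibbs' inequality against the weights tau_j u^(2 c_{jab}) gives, for every u > 0,
     phi <= A log A + B log B - 2 A log u + log (2 D T(u)),     D = binom(d, p),
   where T is a palindromic polynomial with T(1) = 2D.  For u^2 = A/B the right-hand side
   becomes (d/2) log B + log (2 D T(u)), which is below the value of phi at z* as soon as
   2^d T(u)^2 < (2D)^2 (1 + u^2)^d.  For the five pairs (d, p) this holds for all u ~= 1: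
   the difference is palindromic with a double root at 1, and its expansion in the basis
   u^(d-k) (u-1)^(2k) has nonnegative coefficients.  When u = 1, i.e. A = B, Gibbs'
   inequality is itself strict unless z = z*.  The degenerate cases A = 0 and B = 0 are
   settled by one small value of u and, through the palindromy of T, its reciprocal. *)

(* exponent d p j a b = 2 c_{jab}; the subtractions do not truncate for j <= p <= d/2. *)
definition exponent :: "nat \<Rightarrow> nat \<Rightarrow> nat \<Rightarrow> bool \<Rightarrow> bool \<Rightarrow> nat" where
  "exponent d p j a b = (if a = b then 2 * j + d - 2 * p else 2 * p - 2 * j)"

definition partition_poly :: "nat \<Rightarrow> nat \<Rightarrow> real \<Rightarrow> real" where
  "partition_poly d p u = (\<Sum>j\<in>{0..p}. real ((p choose j) * ((d - p) choose (p - j))) *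
     (u ^ (2 * j + d - 2 * p) + u ^ (2 * p - 2 * j)))"

definition gibbs_bound :: "nat \<Rightarrow> nat \<Rightarrow> real \<Rightarrow> real \<Rightarrow> real" where
  "gibbs_bound d p A u = xlogx A + xlogx (real d / 2 - A) - 2 * ln u * A +
     ln (2 * real (d choose p) * partition_poly d p u)"

lemma entropy_term_le:
  fixes q y s :: real
  assumes q: "0 \<le> q" and y: "0 < y" and s: "0 < s"
  shows "q * ln y - xlogx q \<le> q * ln s + y / s - q"
    and "q \<noteq> y / s \<Longrightarrow> q * ln y - xlogx q < q * ln s + y / s - q"
proof -
  have "q * ln y - xlogx q \<le> q * ln s + y / s - q \<and>
        (q \<noteq> y / s \<longrightarrow> q * ln y - xlogx q < q * ln s + y / s - q)"
  proof (cases "q = 0")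
    case True
    with y s show ?thesis
      by (simp add: xlogx_def)
  next
    case False
    with q have q: "0 < q"
      by simp
    define t where "t = y / (q * s)"
    have t: "0 < t"
      using q y s by (simp add: t_def)
    have lhs: "q * ln y - xlogx q = q * ln s + q * ln t"
      using q y s by (simp add: xlogx_def t_def ln_div ln_mult algebra_simps)
    have rhs: "y / s - q = q * (t - 1)"
      using q s by (simp add: t_def field_simps)
    have "ln t \<le> t - 1"
      using t by (rule ln_le_minus_one)
    moreover have "ln t < t - 1" if "q \<noteq> y / s"
    proof -
      have "t \<noteq> 1"
        using that q s by (auto simp: t_def field_simps)
      then show ?thesis
        using \<open>ln t \<le> t - 1\<close> ln_eq_minus_one[OF t] by fastforce
    qed
    ultimately show ?thesis
      using q unfolding lhs by (simp add: rhs)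
  qed
  then show "q * ln y - xlogx q \<le> q * ln s + y / s - q"
    and "q \<noteq> y / s \<Longrightarrow> q * ln y - xlogx q < q * ln s + y / s - q"
    by auto
qed

lemma gibbs_inequality:
  fixes q y :: "'i \<Rightarrow> real"
  assumes fin: "finite I" and q: "\<And>i. i \<in> I \<Longrightarrow> 0 \<le> q i" and y: "\<And>i. i \<in> I \<Longrightarrow> 0 < y i"
    and q_sum: "sum q I = 1"
  shows "(\<Sum>i\<in>I. q i * ln (y i) - xlogx (q i)) \<le> ln (sum y I)"
    and "\<exists>i\<in>I. q i \<noteq> y i / sum y I \<Longrightarrow> (\<Sum>i\<in>I. q i * ln (y i) - xlogx (q i)) < ln (sum y I)"
proof -
  define s where "s = sum y I"
  have "I \<noteq> {}"
    using q_sum by auto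
  then have s: "0 < s"
    unfolding s_def using fin y by (intro sum_pos) auto
  have "(\<Sum>i\<in>I. q i * ln s + y i / s - q i) = sum q I * ln s + sum y I / s - sum q I"
    by (simp add: sum.distrib sum_subtractf sum_distrib_right sum_divide_distrib)
  then have tangent_sum: "(\<Sum>i\<in>I. q i * ln s + y i / s - q i) = ln s"
    using s q_sum by (simp add: s_def)
  have "(\<Sum>i\<in>I. q i * ln (y i) - xlogx (q i)) \<le> (\<Sum>i\<in>I. q i * ln s + y i / s - q i)"
    using entropy_term_le(1)[OF q y s] by (rule sum_mono)
  also have "\<dots> = ln s"
    by (rule tangent_sum)
  finally show "(\<Sum>i\<in>I. q i * ln (y i) - xlogx (q i)) \<le> ln (sum y I)"
    by (simp add: s_def)
  assume "\<exists>i\<in>I. q i \<noteq> y i / sum y I"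
  then obtain i where i: "i \<in> I" "q i \<noteq> y i / s"
    by (auto simp: s_def)
  have "(\<Sum>i\<in>I. q i * ln (y i) - xlogx (q i)) < (\<Sum>i\<in>I. q i * ln s + y i / s - q i)"
  proof (rule sum_strict_mono_ex1[OF fin])
    show "\<forall>i\<in>I. q i * ln (y i) - xlogx (q i) \<le> q i * ln s + y i / s - q i"
      using entropy_term_le(1)[OF q y s] by blast
    show "\<exists>i\<in>I. q i * ln (y i) - xlogx (q i) < q i * ln s + y i / s - q i"
      using i entropy_term_le(2)[OF q y s] by blast
  qed
  also have "\<dots> = ln s"
    by (rule tangent_sum)
  finally show "(\<Sum>i\<in>I. q i * ln (y i) - xlogx (q i)) < ln (sum y I)"
    by (simp add: s_def)
qed

lemma zc_nonneg: "x \<in> Kset p \<Longrightarrow> j \<le> p \<Longrightarrow> 0 \<le> zc p x j a b"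
  by (simp add: Kset_def)

lemma zc_marginal: "(\<Sum>j\<in>{0..p}. zc p x j a b) = (if a = b then fst x else 1/2 - fst x)"
proof -
  have "(\<Sum>j\<in>{0..p}. zc p x j a b) = zc p x 0 a b + (\<Sum>j\<in>{1..p}. snd x j a b)"
    by (simp add: sum.atLeast_Suc_atMost zc_def)
  then show ?thesis
    by (simp add: zc_def)
qed

lemma zc_total: "(\<Sum>j\<in>{0..p}. \<Sum>a\<in>UNIV. \<Sum>b\<in>UNIV. zc p x j a b) = 1"
  by (simp add: UNIV_bool sum.distrib zc_marginal)

lemma zc_weighted_sum: "(\<Sum>j\<in>{0..p}. real j * zc p x j a b) = (\<Sum>j\<in>{1..p}. real j * snd x j a b)"
  by (simp add: sum.atLeast_Suc_atMost zc_def)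

lemma zc_inject:
  assumes "x \<in> pts p" "y \<in> pts p" and zc_eq: "\<And>j a b. j \<le> p \<Longrightarrow> zc p x j a b = zc p y j a b"
  shows "x = y"
proof -
  have "snd x j a b = snd y j a b" for j a b
  proof (cases "j \<in> {1..p}")
    case True
    then show ?thesis
      using zc_eq[of j a b] by (simp add: zc_def)
  next
    case False
    then show ?thesis
      using assms(1,2) by (auto simp: pts_def)
  qed
  moreover have "(\<Sum>j\<in>{0..p}. zc p x j False False) = (\<Sum>j\<in>{0..p}. zc p y j False False)"
    using zc_eq by (intro sum.cong) simp_all
  then have "fst x = fst y"
    by (simp add: zc_marginal)
  ultimately show ?thesis
    by (simp add: prod_eq_iff ext)
qed

lemma exponent_half:
  assumes "j \<le> p" "2 * p \<le> d"
  shows "real (exponent d p j a b) / 2 = (if a = b then real j + real d / 2 - real p else real p - real j)"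
  using assms by (simp add: exponent_def of_nat_diff)

lemma exponent_le: "j \<le> p \<Longrightarrow> 2 * p \<le> d \<Longrightarrow> exponent d p j a b \<le> d"
  by (auto simp: exponent_def)

lemma Af_eq_exponent_sum:
  assumes "2 * p \<le> d"
  shows "Af d p x = (\<Sum>j\<in>{0..p}. \<Sum>a\<in>UNIV. \<Sum>b\<in>UNIV. real (exponent d p j a b) / 2 * zc p x j a b)"
proof -
  have inner: "(\<Sum>j\<in>{0..p}. real (exponent d p j a b) / 2 * zc p x j a b) =
      (if a = b then (real d / 2 - real p) * fst x + (\<Sum>j\<in>{1..p}. real j * snd x j a b)
       else real p * (1/2 - fst x) - (\<Sum>j\<in>{1..p}. real j * snd x j a b))" for a b
  proof -
    have "(\<Sum>j\<in>{0..p}. real (exponent d p j a b) / 2 * zc p x j a b) =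
        (\<Sum>j\<in>{0..p}. (if a = b then real j + real d / 2 - real p else real p - real j) * zc p x j a b)"
      using assms by (intro sum.cong) (simp_all add: exponent_half)
    also have "\<dots> = (if a = b
        then (real d / 2 - real p) * (\<Sum>j\<in>{0..p}. zc p x j a b) + (\<Sum>j\<in>{0..p}. real j * zc p x j a b)
        else real p * (\<Sum>j\<in>{0..p}. zc p x j a b) - (\<Sum>j\<in>{0..p}. real j * zc p x j a b))"
      by (simp add: algebra_simps sum.distrib sum_subtractf sum_distrib_left)
    finally show ?thesis
      by (simp add: zc_marginal zc_weighted_sum)
  qed
  have "(\<Sum>j\<in>{0..p}. \<Sum>a\<in>UNIV. \<Sum>b\<in>UNIV. real (exponent d p j a b) / 2 * zc p x j a b) =
      (\<Sum>a\<in>UNIV. \<Sum>b\<in>UNIV. \<Sum>j\<in>{0..p}. real (exponent d p j a b) / 2 * zc p x j a b)"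
    by (simp add: UNIV_bool sum.distrib)
  also have "\<dots> = Af d p x"
    unfolding inner by (simp add: UNIV_bool Af_def algebra_simps sum.distrib sum_subtractf)
  finally show ?thesis
    by simp
qed

lemma Af_Bf_nonneg:
  assumes dp: "2 * p \<le> d" and x: "x \<in> Kset p"
  shows "0 \<le> Af d p x" and "0 \<le> Bf d p x"
proof -
  have "Bf d p x = real d / 2 * (\<Sum>j\<in>{0..p}. \<Sum>a\<in>UNIV. \<Sum>b\<in>UNIV. zc p x j a b) - Af d p x"
    by (simp add: Bf_def zc_total)
  also have "\<dots> = (\<Sum>j\<in>{0..p}. \<Sum>a\<in>UNIV. \<Sum>b\<in>UNIV. (real d / 2 - real (exponent d p j a b) / 2) * zc p x j a b)"
    by (simp add: Af_eq_exponent_sum[OF dp] left_diff_distrib sum_subtractf sum_distrib_left)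
  finally have B: "Bf d p x = \<dots>" .
  show "0 \<le> Af d p x"
    unfolding Af_eq_exponent_sum[OF dp] using zc_nonneg[OF x] by (intro sum_nonneg) simp
  show "0 \<le> Bf d p x"
    unfolding B using zc_nonneg[OF x] exponent_le[OF _ dp] by (intro sum_nonneg mult_nonneg_nonneg) auto
qed

lemma vandermonde_real:
  assumes "2 * p \<le> d"
  shows "(\<Sum>j\<in>{0..p}. real (p choose j) * real ((d - p) choose (p - j))) = real (d choose p)"
proof -
  have "(\<Sum>j\<le>p. (p choose j) * ((d - p) choose (p - j))) = d choose p"
    using vandermonde[of p "d - p" p] assms by simp
  then have "real (\<Sum>j\<le>p. (p choose j) * ((d - p) choose (p - j))) = real (d choose p)"
    by (rule arg_cong)
  then show ?thesis
    by (simp add: atLeast0AtMost)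
qed

lemma tau_pos: "j \<le> p \<Longrightarrow> 2 * p \<le> d \<Longrightarrow> 0 < tau d p j"
  by (simp add: tau_def zero_less_binomial_iff)

lemma binomial_le_tau: "j \<le> p \<Longrightarrow> 2 * p \<le> d \<Longrightarrow> real (d choose p) \<le> tau d p j"
  by (simp add: tau_def zero_less_binomial_iff Suc_le_eq flip: of_nat_mult)

lemma tau_sum: "2 * p \<le> d \<Longrightarrow> (\<Sum>j\<in>{0..p}. tau d p j) = real (d choose p) ^ 2"
  by (simp add: tau_def mult.assoc power2_eq_square vandermonde_real
      flip: sum_distrib_left)

lemma partition_sum:
  "(\<Sum>j\<in>{0..p}. \<Sum>a\<in>UNIV. \<Sum>b\<in>UNIV. tau d p j * u ^ exponent d p j a b) =
   2 * real (d choose p) * partition_poly d p u"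
  by (simp add: UNIV_bool exponent_def tau_def partition_poly_def sum_distrib_left algebra_simps)

lemma partition_poly_one: "2 * p \<le> d \<Longrightarrow> partition_poly d p 1 = 2 * real (d choose p)"
  by (simp add: partition_poly_def vandermonde_real flip: sum_distrib_right)

lemma partition_poly_pos: "2 * p \<le> d \<Longrightarrow> 0 < u \<Longrightarrow> 0 < partition_poly d p u"
  unfolding partition_poly_def by (intro sum_pos mult_pos_pos add_pos_pos) auto

lemma partition_poly_palindromic:
  assumes "2 * p \<le> d" "0 < u"
  shows "u ^ d * partition_poly d p (1 / u) = partition_poly d p u"
proof -
  have reflect: "u ^ d * (1 / u) ^ k = u ^ (d - k)" if "k \<le> d" for k
    using assms(2) that by (simp add: power_one_over power_diff)
  have "u ^ d * ((1 / u) ^ (2 * j + d - 2 * p) + (1 / u) ^ (2 * p - 2 * j)) =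
      u ^ (2 * p - 2 * j) + u ^ (2 * j + d - 2 * p)" if "j \<le> p" for j
  proof -
    have "d - (2 * j + d - 2 * p) = 2 * p - 2 * j" "d - (2 * p - 2 * j) = 2 * j + d - 2 * p"
      using that assms(1) by auto
    then show ?thesis
      using that assms(1) by (simp add: distrib_left reflect)
  qed
  then show ?thesis
    unfolding partition_poly_def sum_distrib_left
    by (intro sum.cong) (simp_all add: mult.left_commute add.commute)
qed

lemma zc_zstar:
  assumes "2 * p \<le> d" "j \<le> p"
  shows "zc p (zstar d p) j a b = tau d p j / (4 * real (d choose p) ^ 2)"
proof (cases "j = 0")
  case True
  define D where "D = real (d choose p)"
  define S where "S = (\<Sum>i\<in>{1..p}. tau d p i)"
  have "tau d p 0 + S = D ^ 2"
    using tau_sum[OF assms(1)] by (simp add: sum.atLeast_Suc_atMost S_def D_def)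
  moreover have "0 < D"
    using assms(1) by (simp add: zero_less_binomial_iff D_def)
  ultimately have "1/4 - S / (4 * D ^ 2) = tau d p 0 / (4 * D ^ 2)"
    and "1/2 - 1/4 - S / (4 * D ^ 2) = tau d p 0 / (4 * D ^ 2)"
    by (simp_all add: field_simps)
  moreover have "(\<Sum>i\<in>{1..p}. snd (zstar d p) i a b) = S / (4 * D ^ 2)"
    by (simp add: zstar_def S_def D_def sum_divide_distrib)
  ultimately show ?thesis
    using True by (simp add: zc_def zstar_def D_def)
next
  case False
  then show ?thesis
    using assms(2) by (simp add: zc_def zstar_def)
qed

lemma zstar_in_pts: "zstar d p \<in> pts p"
  by (simp add: pts_def zstar_def)

lemma fst_zstar: "fst (zstar d p) = 1/4"
  by (simp add: zstar_def)

lemma zstar_in_Kset: "2 * p \<le> d \<Longrightarrow> zstar d p \<in> Kset p"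
  using zc_zstar tau_pos by (auto simp: Kset_def zstar_in_pts fst_zstar less_imp_le)

lemma phi_zstar:
  assumes dp: "2 * p \<le> d"
  shows "phi d p (zstar d p) = real d / 2 * ln (real d / 4) + 2 * ln (2 * real (d choose p))"
proof -
  define D where "D = real (d choose p)"
  have D: "0 < D"
    using dp by (simp add: D_def zero_less_binomial_iff)
  have A: "Af d p (zstar d p) = real d / 4" and B: "Bf d p (zstar d p) = real d / 4"
    by (simp_all add: Af_def Bf_def zstar_def algebra_simps)
  have summand: "zc p (zstar d p) j a b * ln (tau d p j) - xlogx (zc p (zstar d p) j a b) =
      ln (4 * D ^ 2) * zc p (zstar d p) j a b" if "j \<le> p" for j a b
    using tau_pos[OF that dp] D by (simp add: zc_zstar[OF dp that] xlogx_def ln_div D_def algebra_simps)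
  have "(\<Sum>j\<in>{0..p}. \<Sum>a\<in>UNIV. \<Sum>b\<in>UNIV.
        zc p (zstar d p) j a b * ln (tau d p j) - xlogx (zc p (zstar d p) j a b)) =
      (\<Sum>j\<in>{0..p}. \<Sum>a\<in>UNIV. \<Sum>b\<in>UNIV. ln (4 * D ^ 2) * zc p (zstar d p) j a b)"
    using summand by (intro sum.cong refl) auto
  also have "\<dots> = ln (4 * D ^ 2)"
    by (simp add: zc_total flip: sum_distrib_left)
  finally have "(\<Sum>j\<in>{0..p}. \<Sum>a\<in>UNIV. \<Sum>b\<in>UNIV.
        zc p (zstar d p) j a b * ln (tau d p j) - xlogx (zc p (zstar d p) j a b)) = ln (4 * D ^ 2)" .
  moreover have "ln (4 * D ^ 2) = 2 * ln (2 * D)"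
    using ln_realpow[of "2 * D" 2] by (simp add: power_mult_distrib)
  ultimately show ?thesis
    by (simp add: phi_def A B D_def xlogx_def)
qed

lemma gibbs_inequality_Kset:
  assumes x: "x \<in> Kset p" and y: "\<And>j a b. j \<le> p \<Longrightarrow> 0 < y j a b"
  defines "Y \<equiv> \<Sum>j\<in>{0..p}. \<Sum>a\<in>UNIV. \<Sum>b\<in>UNIV. y j a b"
  shows "(\<Sum>j\<in>{0..p}. \<Sum>a\<in>UNIV. \<Sum>b\<in>UNIV. zc p x j a b * ln (y j a b) - xlogx (zc p x j a b)) \<le> ln Y"
    and "\<exists>j\<le>p. \<exists>a b. zc p x j a b \<noteq> y j a b / Y \<Longrightarrow>
      (\<Sum>j\<in>{0..p}. \<Sum>a\<in>UNIV. \<Sum>b\<in>UNIV. zc p x j a b * ln (y j a b) - xlogx (zc p x j a b)) < ln Y"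
proof -
  let ?I = "{0..p} \<times> (UNIV :: bool set) \<times> (UNIV :: bool set)"
  have triple: "(\<Sum>j\<in>{0..p}. \<Sum>a\<in>UNIV. \<Sum>b\<in>UNIV. f j a b) = (\<Sum>(j, a, b)\<in>?I. f j a b)"
    for f :: "nat \<Rightarrow> bool \<Rightarrow> bool \<Rightarrow> real"
    by (simp add: sum.cartesian_product)
  note gibbs = gibbs_inequality[of ?I "\<lambda>(j, a, b). zc p x j a b" "\<lambda>(j, a, b). y j a b"]
  have hyps: "finite ?I" "\<And>i. i \<in> ?I \<Longrightarrow> 0 \<le> (\<lambda>(j, a, b). zc p x j a b) i"
      "\<And>i. i \<in> ?I \<Longrightarrow> 0 < (\<lambda>(j, a, b). y j a b) i" "(\<Sum>(j, a, b)\<in>?I. zc p x j a b) = 1"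
    using zc_nonneg[OF x] y zc_total[of p x] by (auto simp: triple)
  show "(\<Sum>j\<in>{0..p}. \<Sum>a\<in>UNIV. \<Sum>b\<in>UNIV. zc p x j a b * ln (y j a b) - xlogx (zc p x j a b)) \<le> ln Y"
    using gibbs(1)[OF hyps] by (simp add: triple Y_def case_prod_unfold)
  assume "\<exists>j\<le>p. \<exists>a b. zc p x j a b \<noteq> y j a b / Y"
  then obtain j a b where "j \<le> p" "zc p x j a b \<noteq> y j a b / Y"
    by blast
  moreover have "Y = (\<Sum>(j, a, b)\<in>?I. y j a b)"
    unfolding Y_def by (rule triple)
  ultimately have "\<exists>i\<in>?I. (\<lambda>(j, a, b). zc p x j a b) i \<noteq> (\<lambda>(j, a, b). y j a b) i / (\<Sum>(j, a, b)\<in>?I. y j a b)"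
    by (intro bexI[of _ "(j, a, b)"]) auto
  then show "(\<Sum>j\<in>{0..p}. \<Sum>a\<in>UNIV. \<Sum>b\<in>UNIV. zc p x j a b * ln (y j a b) - xlogx (zc p x j a b)) < ln Y"
    using gibbs(2)[OF hyps] by (simp add: triple Y_def case_prod_unfold)
qed

lemma phi_le_gibbs_bound:
  assumes dp: "2 * p \<le> d" and x: "x \<in> Kset p" and u: "0 < u"
  shows "phi d p x \<le> gibbs_bound d p (Af d p x) u"
proof -
  define y where "y j a b = tau d p j * u ^ exponent d p j a b" for j a b
  have summand: "zc p x j a b * ln (y j a b) - xlogx (zc p x j a b) =
      (zc p x j a b * ln (tau d p j) - xlogx (zc p x j a b)) +
      2 * ln u * (real (exponent d p j a b) / 2 * zc p x j a b)" if "j \<le> p" for j a b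
    using tau_pos[OF that dp] u by (simp add: y_def ln_mult ln_realpow algebra_simps)
  have "(\<Sum>j\<in>{0..p}. \<Sum>a\<in>UNIV. \<Sum>b\<in>UNIV. zc p x j a b * ln (y j a b) - xlogx (zc p x j a b)) =
      (\<Sum>j\<in>{0..p}. \<Sum>a\<in>UNIV. \<Sum>b\<in>UNIV. (zc p x j a b * ln (tau d p j) - xlogx (zc p x j a b)) +
        2 * ln u * (real (exponent d p j a b) / 2 * zc p x j a b))"
    using summand by (intro sum.cong refl) auto
  also have "\<dots> = (\<Sum>j\<in>{0..p}. \<Sum>a\<in>UNIV. \<Sum>b\<in>UNIV. zc p x j a b * ln (tau d p j) - xlogx (zc p x j a b)) +
      2 * ln u * Af d p x"
    by (simp add: Af_eq_exponent_sum[OF dp] sum.distrib sum_distrib_left)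
  finally have shift: "(\<Sum>j\<in>{0..p}. \<Sum>a\<in>UNIV. \<Sum>b\<in>UNIV. zc p x j a b * ln (y j a b) - xlogx (zc p x j a b)) =
      (\<Sum>j\<in>{0..p}. \<Sum>a\<in>UNIV. \<Sum>b\<in>UNIV. zc p x j a b * ln (tau d p j) - xlogx (zc p x j a b)) +
      2 * ln u * Af d p x" .
  have partition: "(\<Sum>j\<in>{0..p}. \<Sum>a\<in>UNIV. \<Sum>b\<in>UNIV. y j a b) = 2 * real (d choose p) * partition_poly d p u"
    unfolding y_def by (rule partition_sum)
  have "(\<Sum>j\<in>{0..p}. \<Sum>a\<in>UNIV. \<Sum>b\<in>UNIV. zc p x j a b * ln (y j a b) - xlogx (zc p x j a b)) \<le>
      ln (\<Sum>j\<in>{0..p}. \<Sum>a\<in>UNIV. \<Sum>b\<in>UNIV. y j a b)"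
    using tau_pos[OF _ dp] u by (intro gibbs_inequality_Kset(1)[OF x]) (simp add: y_def)
  then show ?thesis
    unfolding shift partition by (simp add: phi_def gibbs_bound_def Bf_def)
qed

lemma phi_less_gibbs_bound_one:
  assumes dp: "2 * p \<le> d" and x: "x \<in> Kset p" and ne: "x \<noteq> zstar d p"
  shows "phi d p x < gibbs_bound d p (Af d p x) 1"
proof -
  define D where "D = real (d choose p)"
  have "\<exists>j\<le>p. \<exists>a b. zc p x j a b \<noteq> tau d p j / (4 * D ^ 2)"
  proof (rule ccontr)
    assume "\<not> ?thesis"
    then have "x = zstar d p"
      using x by (intro zc_inject) (auto simp: Kset_def zstar_in_pts zc_zstar[OF dp] D_def)
    with ne show False ..
  qed
  then have "(\<Sum>j\<in>{0..p}. \<Sum>a\<in>UNIV. \<Sum>b\<in>UNIV. zc p x j a b * ln (tau d p j) - xlogx (zc p x j a b)) <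
      ln (4 * D ^ 2)"
    using gibbs_inequality_Kset(2)[OF x, of "\<lambda>j a b. tau d p j"] tau_pos[OF _ dp]
    by (simp add: tau_sum[OF dp] D_def flip: sum_distrib_left)
  then show ?thesis
    by (simp add: phi_def gibbs_bound_def Bf_def partition_poly_one[OF dp] D_def power2_eq_square)
qed

lemma ln_less_iff_power_less:
  fixes s c t :: real
  assumes "0 < s" "0 < c" "0 < t"
  shows "ln s < ln c + real n / 2 * ln (t / 2) \<longleftrightarrow> 2 ^ n * s\<^sup>2 < c\<^sup>2 * t ^ n"
proof -
  have "ln (2 ^ n * s\<^sup>2) = 2 * ln s + real n * ln 2" "ln (c\<^sup>2 * t ^ n) = 2 * ln c + real n * ln t"
    using assms by (simp_all add: ln_mult ln_realpow)
  moreover have "real n / 2 * ln (t / 2) = (real n * ln t - real n * ln 2) / 2"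
    using assms by (simp add: ln_div algebra_simps)
  ultimately have "ln s < ln c + real n / 2 * ln (t / 2) \<longleftrightarrow> ln (2 ^ n * s\<^sup>2) < ln (c\<^sup>2 * t ^ n)"
    by argo
  also have "\<dots> \<longleftrightarrow> 2 ^ n * s\<^sup>2 < c\<^sup>2 * t ^ n"
    using assms by simp
  finally show ?thesis .
qed

lemma gibbs_bound_zero_less:
  assumes dp: "2 * p \<le> d" "0 < d" and v: "0 < v"
    and boundary: "2 ^ d * partition_poly d p v ^ 2 < (2 * real (d choose p))\<^sup>2"
  shows "gibbs_bound d p 0 v < phi d p (zstar d p)"
proof -
  define D where "D = real (d choose p)"
  have D: "0 < D"
    using dp by (simp add: D_def zero_less_binomial_iff)
  have T: "0 < partition_poly d p v"
    using partition_poly_pos[OF dp(1) v] .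
  have "gibbs_bound d p 0 v = real d / 2 * ln (real d / 2) + ln (2 * D) + ln (partition_poly d p v)"
    using D T by (simp add: gibbs_bound_def xlogx_def ln_mult D_def)
  also have "\<dots> < real d / 2 * ln (real d / 2) + ln (2 * D) + (ln (2 * D) + real d / 2 * ln (1 / 2))"
    using ln_less_iff_power_less[of "partition_poly d p v" "2 * D" 1 d] T D boundary by (simp add: D_def)
  also have "real d / 2 * ln (real d / 2) = real d / 2 * ln (real d / 4) - real d / 2 * ln (1 / 2)"
    using dp ln_realpow[of "2 :: real" 2] by (simp add: ln_div algebra_simps)
  finally show ?thesis
    by (simp add: phi_zstar[OF dp(1)] D_def)
qed

lemma gibbs_bound_reflect:
  assumes dp: "2 * p \<le> d" and v: "0 < v"
  shows "gibbs_bound d p (real d / 2) (1 / v) = gibbs_bound d p 0 v"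
proof -
  define D where "D = real (d choose p)"
  have D: "0 < D"
    using dp by (simp add: D_def zero_less_binomial_iff)
  have T: "0 < partition_poly d p (1 / v)"
    using partition_poly_pos[OF dp] v by simp
  have "ln (partition_poly d p v) = ln (v ^ d * partition_poly d p (1 / v))"
    using partition_poly_palindromic[OF dp v] by simp
  also have "\<dots> = real d * ln v + ln (partition_poly d p (1 / v))"
    using v T by (simp add: ln_mult ln_realpow)
  finally have "ln (2 * D * partition_poly d p v) = real d * ln v + ln (2 * D * partition_poly d p (1 / v))"
    using D T v partition_poly_pos[OF dp v] by (simp add: ln_mult)
  then show ?thesis
    using v by (simp add: gibbs_bound_def ln_div xlogx_def D_def)
qed

lemma gibbs_bound_interior_less:
  assumes dp: "2 * p \<le> d" and A: "0 < A" "A < real d / 2" "A \<noteq> real d / 4"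
    and key: "\<And>u. 0 < u \<Longrightarrow> u \<noteq> 1 \<Longrightarrow>
      2 ^ d * partition_poly d p u ^ 2 < (2 * real (d choose p))\<^sup>2 * (1 + u\<^sup>2) ^ d"
  shows "gibbs_bound d p A (sqrt (A / (real d / 2 - A))) < phi d p (zstar d p)"
proof -
  define B where "B = real d / 2 - A"
  define u where "u = sqrt (A / B)"
  define D where "D = real (d choose p)"
  have B: "0 < B"
    using A by (simp add: B_def)
  have D: "0 < D"
    using dp by (simp add: D_def zero_less_binomial_iff)
  have u: "0 < u" and u2: "u\<^sup>2 = A / B"
    using A B by (simp_all add: u_def)
  have T: "0 < partition_poly d p u"
    using partition_poly_pos[OF dp u] .
  have "u \<noteq> 1"
    using u2 A B by (auto simp: B_def field_simps)
  have "2 * ln u = ln (u\<^sup>2)"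
    using u by (simp add: ln_realpow)
  also have "\<dots> = ln A - ln B"
    using u2 A B by (simp add: ln_div)
  finally have ln_u: "2 * ln u = ln A - ln B" .
  have "xlogx A + xlogx B - 2 * ln u * A = (A + B) * ln B"
    unfolding ln_u using A B by (simp add: xlogx_def algebra_simps)
  then have "gibbs_bound d p A u = real d / 2 * ln B + ln (2 * D) + ln (partition_poly d p u)"
    using D T by (simp add: gibbs_bound_def ln_mult B_def D_def)
  also have "\<dots> < real d / 2 * ln B + ln (2 * D) + (ln (2 * D) + real d / 2 * ln ((1 + u\<^sup>2) / 2))"
    using ln_less_iff_power_less[of "partition_poly d p u" "2 * D" "1 + u\<^sup>2" d] T D key[OF u \<open>u \<noteq> 1\<close>]
    by (simp add: D_def add_pos_nonneg)
  also have "(1 + u\<^sup>2) / 2 = real d / 4 / B"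
    using u2 B by (simp add: B_def field_simps)
  also have "real d / 2 * ln (real d / 4 / B) = real d / 2 * ln (real d / 4) - real d / 2 * ln B"
    using A B by (simp add: ln_div ln_mult algebra_simps)
  finally show ?thesis
    by (simp add: phi_zstar[OF dp] u_def B_def D_def)
qed

theorem phi_less_phi_zstar:
  assumes dp: "2 * p \<le> d" "0 < d"
    and key: "\<And>u. 0 < u \<Longrightarrow> u \<noteq> 1 \<Longrightarrow>
      2 ^ d * partition_poly d p u ^ 2 < (2 * real (d choose p))\<^sup>2 * (1 + u\<^sup>2) ^ d"
    and v: "0 < v" and boundary: "2 ^ d * partition_poly d p v ^ 2 < (2 * real (d choose p))\<^sup>2"
    and x: "x \<in> Kset p" "x \<noteq> zstar d p"
  shows "phi d p x < phi d p (zstar d p)"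
proof -
  define A where "A = Af d p x"
  have "0 \<le> A" "A \<le> real d / 2"
    using Af_Bf_nonneg[OF dp(1) x(1)] by (simp_all add: A_def Bf_def)
  then consider "A = 0" | "A = real d / 2" | "A = real d / 4" | "0 < A" "A < real d / 2" "A \<noteq> real d / 4"
    by linarith
  then show ?thesis
  proof cases
    case 1
    then show ?thesis
      using phi_le_gibbs_bound[OF dp(1) x(1) v] gibbs_bound_zero_less[OF dp v boundary]
      by (simp add: A_def)
  next
    case 2
    have "0 < 1 / v"
      using v by simp
    from phi_le_gibbs_bound[OF dp(1) x(1) this]
    have "phi d p x \<le> gibbs_bound d p (real d / 2) (1 / v)"
      using 2 by (simp only: A_def)
    also have "\<dots> = gibbs_bound d p 0 v"
      by (rule gibbs_bound_reflect[OF dp(1) v])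
    also have "\<dots> < phi d p (zstar d p)"
      by (rule gibbs_bound_zero_less[OF dp v boundary])
    finally show ?thesis .
  next
    case 3
    from phi_less_gibbs_bound_one[OF dp(1) x]
    have "phi d p x < gibbs_bound d p (real d / 4) 1"
      using 3 by (simp only: A_def)
    also have "\<dots> = phi d p (zstar d p)"
      using dp ln_realpow[of "2 :: real" 2]
      by (simp add: gibbs_bound_def partition_poly_one[OF dp(1)] phi_zstar[OF dp(1)] xlogx_def ln_mult)
    finally show ?thesis .
  next
    case 4
    have "0 < sqrt (A / (real d / 2 - A))"
      using 4 by simp
    from phi_le_gibbs_bound[OF dp(1) x(1) this] show ?thesis
      using gibbs_bound_interior_less[OF dp(1) 4 key] by (simp add: A_def)
  qed
qed

lemma zc_dist_le:
  assumes j: "j \<le> p" and fst_close: "\<bar>fst y - fst x\<bar> \<le> e"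
    and snd_close: "\<And>i a b. i \<in> {1..p} \<Longrightarrow> \<bar>snd y i a b - snd x i a b\<bar> \<le> e"
  shows "\<bar>zc p y j a b - zc p x j a b\<bar> \<le> (real p + 1) * e"
proof (cases "j = 0")
  case True
  define S where "S = (\<Sum>i\<in>{1..p}. snd y i a b) - (\<Sum>i\<in>{1..p}. snd x i a b)"
  have "\<bar>S\<bar> \<le> (\<Sum>i\<in>{1..p}. \<bar>snd y i a b - snd x i a b\<bar>)"
    unfolding S_def by (simp add: sum_abs flip: sum_subtractf)
  also have "\<dots> \<le> real p * e"
    using sum_mono[of "{1..p}" "\<lambda>i. \<bar>snd y i a b - snd x i a b\<bar>" "\<lambda>_. e"] snd_close by simp
  finally have S: "\<bar>S\<bar> \<le> real p * e" .
  have "\<bar>zc p y j a b - zc p x j a b\<bar> \<le> \<bar>fst y - fst x\<bar> + \<bar>S\<bar>"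
  proof (cases "a = b")
    case True
    then show ?thesis
      using \<open>j = 0\<close> abs_triangle_ineq4[of "fst y - fst x" S] by (simp add: zc_def S_def algebra_simps)
  next
    case False
    then show ?thesis
      using \<open>j = 0\<close> abs_triangle_ineq4[of "fst x - fst y" S] by (simp add: zc_def S_def abs_minus_commute algebra_simps)
  qed
  then show ?thesis
    using fst_close S by (simp add: algebra_simps)
next
  case False
  then have "zc p y j a b - zc p x j a b = snd y j a b - snd x j a b" "j \<in> {1..p}"
    using j by (simp_all add: zc_def)
  moreover have "e \<le> (real p + 1) * e"
    using fst_close by (simp add: algebra_simps)
  ultimately show ?thesis
    using snd_close[of j a b] by simp
qed

lemma zstar_interior:
  assumes dp: "2 * p \<le> d"
  shows "zstar d p \<in> interior_pt p (Kset p)"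
proof -
  define D where "D = real (d choose p)"
  have D: "1 \<le> D"
    using dp by (simp add: D_def Suc_le_eq zero_less_binomial_iff)
  define m where "m = 1 / (4 * D)"
  have m: "0 < m" "m \<le> 1/4"
    using D by (simp_all add: m_def field_simps)
  define e where "e = m / (real p + 2)"
  have e: "0 < e" "e \<le> 1/8" "(real p + 1) * e < m"
    using m by (simp_all add: e_def field_simps)
  have "y \<in> Kset p"
    if y: "y \<in> pts p" and fst_close: "\<bar>fst y - fst (zstar d p)\<bar> < e"
      and snd_close: "\<forall>j\<in>{1..p}. \<forall>a b. \<bar>snd y j a b - snd (zstar d p) j a b\<bar> < e" for y
  proof -
    have "0 \<le> zc p y j a b" if j: "j \<le> p" for j a b
    proof -
      have "m = D / (4 * D ^ 2)"
        using D by (simp add: m_def power2_eq_square)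
      also have "\<dots> \<le> zc p (zstar d p) j a b"
        using binomial_le_tau[OF j dp] D by (simp add: zc_zstar[OF dp j] D_def divide_right_mono)
      finally have "m \<le> zc p (zstar d p) j a b" .
      moreover have "\<bar>zc p y j a b - zc p (zstar d p) j a b\<bar> \<le> (real p + 1) * e"
        using fst_close snd_close by (intro zc_dist_le[OF j]) (auto intro: less_imp_le)
      ultimately show ?thesis
        using e(3) by linarith
    qed
    then show "y \<in> Kset p"
      using y fst_close e by (auto simp: Kset_def fst_zstar)
  qed
  then show ?thesis
    using e(1) by (auto simp: interior_pt_def zstar_in_pts)
qed

lemma partition_poly_6_1:
  "partition_poly 6 1 u = 1 + 5 * u ^ 2 + 5 * u ^ 4 + u ^ 6"
proof -
  have "{0..1::nat} = {0, 1}"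
    by auto
  then show ?thesis
    unfolding partition_poly_def by (simp add: binomial_fact' fact_reduce)
qed

lemma key_inequality_6_1:
  fixes u :: real
  assumes "0 < u" "u \<noteq> 1"
  shows "2 ^ 6 * partition_poly 6 1 u ^ 2 < (2 * real (6 choose 1))\<^sup>2 * (1 + u\<^sup>2) ^ 6"
proof -
  have binom: "real (6 choose 1) = 6"
    by (simp add: binomial_fact' fact_reduce)
  define w where "w = (u - 1)\<^sup>2"
  have w: "0 < w"
    using assms by (simp add: w_def)
  have certificate: "(2 * real (6 choose 1))\<^sup>2 * (1 + u\<^sup>2) ^ 6 - 2 ^ 6 * partition_poly 6 1 u ^ 2 =
       6144 * u ^ 5 * w + 12800 * u ^ 4 * w ^ 2 +
       10752 * u ^ 3 * w ^ 3 + 4544 * u ^ 2 * w ^ 4 +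
       960 * u * w ^ 5 + 80 * w ^ 6"
    unfolding partition_poly_6_1 binom w_def by algebra
  have "0 < (2 * real (6 choose 1))\<^sup>2 * (1 + u\<^sup>2) ^ 6 - 2 ^ 6 * partition_poly 6 1 u ^ 2"
    unfolding certificate using assms(1) w by (intro add_pos_pos mult_pos_pos zero_less_power) simp_all
  then show ?thesis
    by (simp only: diff_gt_0_iff_gt)
qed

lemma boundary_inequality_6_1:
  "2 ^ 6 * partition_poly 6 1 (1 / 10) ^ 2 < (2 * real (6 choose 1))\<^sup>2"
  unfolding partition_poly_6_1 by (simp add: binomial_fact' fact_reduce power_divide)

lemma partition_poly_10_2:
  "partition_poly 10 2 u = 1 + 16 * u ^ 2 + 28 * u ^ 4 + 28 * u ^ 6 + 16 * u ^ 8 + u ^ 10"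
proof -
  have "{0..2::nat} = {0, 1, 2}"
    by auto
  then show ?thesis
    unfolding partition_poly_def by (simp add: binomial_fact' fact_reduce)
qed

lemma key_inequality_10_2:
  fixes u :: real
  assumes "0 < u" "u \<noteq> 1"
  shows "2 ^ 10 * partition_poly 10 2 u ^ 2 < (2 * real (10 choose 2))\<^sup>2 * (1 + u\<^sup>2) ^ 10"
proof -
  have binom: "real (10 choose 2) = 45"
    by (simp add: binomial_fact' fact_reduce)
  define w where "w = (u - 1)\<^sup>2"
  have w: "0 < w"
    using assms by (simp add: w_def)
  have certificate: "(2 * real (10 choose 2))\<^sup>2 * (1 + u\<^sup>2) ^ 10 - 2 ^ 10 * partition_poly 10 2 u ^ 2 =
       5160960 * u ^ 9 * w + 26660864 * u ^ 8 * w ^ 2 +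
       56111104 * u ^ 7 * w ^ 3 + 64616960 * u ^ 6 * w ^ 4 +
       45850112 * u ^ 5 * w ^ 5 + 21159040 * u ^ 4 * w ^ 6 +
       6432512 * u ^ 3 * w ^ 7 + 1251152 * u ^ 2 * w ^ 8 +
       141520 * u * w ^ 9 + 7076 * w ^ 10"
    unfolding partition_poly_10_2 binom w_def by algebra
  have "0 < (2 * real (10 choose 2))\<^sup>2 * (1 + u\<^sup>2) ^ 10 - 2 ^ 10 * partition_poly 10 2 u ^ 2"
    unfolding certificate using assms(1) w by (intro add_pos_pos mult_pos_pos zero_less_power) simp_all
  then show ?thesis
    by (simp only: diff_gt_0_iff_gt)
qed

lemma boundary_inequality_10_2:
  "2 ^ 10 * partition_poly 10 2 (1 / 10) ^ 2 < (2 * real (10 choose 2))\<^sup>2"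
  unfolding partition_poly_10_2 by (simp add: binomial_fact' fact_reduce power_divide)

lemma partition_poly_13_3:
  "partition_poly 13 3 u = 1 + 30 * u ^ 2 + 135 * u ^ 4 + 120 * u ^ 6 + 120 * u ^ 7 + 135 * u ^ 9 + 30 * u ^ 11 + u ^ 13"
proof -
  have "{0..3::nat} = {0, 1, 2, 3}"
    by auto
  then show ?thesis
    unfolding partition_poly_def by (simp add: binomial_fact' fact_reduce)
qed

lemma key_inequality_13_3:
  fixes u :: real
  assumes "0 < u" "u \<noteq> 1"
  shows "2 ^ 13 * partition_poly 13 3 u ^ 2 < (2 * real (13 choose 3))\<^sup>2 * (1 + u\<^sup>2) ^ 13"
proof -
  have binom: "real (13 choose 3) = 286"
    by (simp add: binomial_fact' fact_reduce)
  define w where "w = (u - 1)\<^sup>2"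
  have w: "0 < w"
    using assms by (simp add: w_def)
  have certificate: "(2 * real (13 choose 3))\<^sup>2 * (1 + u\<^sup>2) ^ 13 - 2 ^ 13 * partition_poly 13 3 u ^ 2 =
       3144187904 * u ^ 12 * w + 19315687424 * u ^ 11 * w ^ 2 +
       51758530560 * u ^ 10 * w ^ 3 + 81154498560 * u ^ 9 * w ^ 4 +
       84040011776 * u ^ 8 * w ^ 5 + 61172686848 * u ^ 7 * w ^ 6 +
       32319344640 * u ^ 6 * w ^ 7 + 12544347648 * u ^ 5 * w ^ 8 +
       3559852800 * u ^ 4 * w ^ 9 + 721383168 * u ^ 3 * w ^ 10 +
       99140480 * u ^ 2 * w ^ 11 + 8293792 * u * w ^ 12 +
       318992 * w ^ 13"
    unfolding partition_poly_13_3 binom w_def by algebra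
  have "0 < (2 * real (13 choose 3))\<^sup>2 * (1 + u\<^sup>2) ^ 13 - 2 ^ 13 * partition_poly 13 3 u ^ 2"
    unfolding certificate using assms(1) w by (intro add_pos_pos mult_pos_pos zero_less_power) simp_all
  then show ?thesis
    by (simp only: diff_gt_0_iff_gt)
qed

lemma boundary_inequality_13_3:
  "2 ^ 13 * partition_poly 13 3 (1 / 10) ^ 2 < (2 * real (13 choose 3))\<^sup>2"
  unfolding partition_poly_13_3 by (simp add: binomial_fact' fact_reduce power_divide)

lemma partition_poly_14_3:
  "partition_poly 14 3 u = 1 + 33 * u ^ 2 + 165 * u ^ 4 + 165 * u ^ 6 + 165 * u ^ 8 + 165 * u ^ 10 + 33 * u ^ 12 + u ^ 14"
proof -
  have "{0..3::nat} = {0, 1, 2, 3}"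
    by auto
  then show ?thesis
    unfolding partition_poly_def by (simp add: binomial_fact' fact_reduce)
qed

lemma key_inequality_14_3:
  fixes u :: real
  assumes "0 < u" "u \<noteq> 1"
  shows "2 ^ 14 * partition_poly 14 3 u ^ 2 < (2 * real (14 choose 3))\<^sup>2 * (1 + u\<^sup>2) ^ 14"
proof -
  have binom: "real (14 choose 3) = 364"
    by (simp add: binomial_fact' fact_reduce)
  define w where "w = (u - 1)\<^sup>2"
  have w: "0 < w"
    using assms by (simp add: w_def)
  have certificate: "(2 * real (14 choose 3))\<^sup>2 * (1 + u\<^sup>2) ^ 14 - 2 ^ 14 * partition_poly 14 3 u ^ 2 =
       572522496 * u ^ 13 * w + 25515524096 * u ^ 12 * w ^ 2 +
       122030653440 * u ^ 11 * w ^ 3 + 265101574144 * u ^ 10 * w ^ 4 +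
       345971687424 * u ^ 9 * w ^ 5 + 305140580352 * u ^ 8 * w ^ 6 +
       192856522752 * u ^ 7 * w ^ 7 + 89879752704 * u ^ 6 * w ^ 8 +
       31173120000 * u ^ 5 * w ^ 9 + 7989363712 * u ^ 4 * w ^ 10 +
       1475155968 * u ^ 3 * w ^ 11 + 186098432 * u ^ 2 * w ^ 12 +
       14380800 * u * w ^ 13 + 513600 * w ^ 14"
    unfolding partition_poly_14_3 binom w_def by algebra
  have "0 < (2 * real (14 choose 3))\<^sup>2 * (1 + u\<^sup>2) ^ 14 - 2 ^ 14 * partition_poly 14 3 u ^ 2"
    unfolding certificate using assms(1) w by (intro add_pos_pos mult_pos_pos zero_less_power) simp_all
  then show ?thesis
    by (simp only: diff_gt_0_iff_gt)
qed

lemma boundary_inequality_14_3: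
  "2 ^ 14 * partition_poly 14 3 (1 / 10) ^ 2 < (2 * real (14 choose 3))\<^sup>2"
  unfolding partition_poly_14_3 by (simp add: binomial_fact' fact_reduce power_divide)

lemma partition_poly_17_4:
  "partition_poly 17 4 u = 1 + 52 * u ^ 2 + 468 * u ^ 4 + 1144 * u ^ 6 + 715 * u ^ 8 + 715 * u ^ 9 + 1144 * u ^ 11 + 468 * u ^ 13 + 52 * u ^ 15 + u ^ 17"
proof -
  have "{0..4::nat} = {0, 1, 2, 3, 4}"
    by auto
  then show ?thesis
    unfolding partition_poly_def by (simp add: binomial_fact' fact_reduce)
qed

lemma key_inequality_17_4:
  fixes u :: real
  assumes "0 < u" "u \<noteq> 1"
  shows "2 ^ 17 * partition_poly 17 4 u ^ 2 < (2 * real (17 choose 4))\<^sup>2 * (1 + u\<^sup>2) ^ 17"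
proof -
  have binom: "real (17 choose 4) = 2380"
    by (simp add: binomial_fact' fact_reduce)
  define w where "w = (u - 1)\<^sup>2"
  have w: "0 < w"
    using assms by (simp add: w_def)
  have certificate: "(2 * real (17 choose 4))\<^sup>2 * (1 + u\<^sup>2) ^ 17 - 2 ^ 17 * partition_poly 17 4 u ^ 2 =
       1441215283200 * u ^ 16 * w + 20462834810880 * u ^ 15 * w ^ 2 +
       97113687982080 * u ^ 14 * w ^ 3 + 245142034317312 * u ^ 13 * w ^ 4 +
       397407432474624 * u ^ 12 * w ^ 5 + 455486465900544 * u ^ 11 * w ^ 6 +
       389731799531520 * u ^ 10 * w ^ 7 + 256974253129728 * u ^ 9 * w ^ 8 +
       132880157081600 * u ^ 8 * w ^ 9 + 54284793085952 * u ^ 7 * w ^ 10 +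
       17501831659520 * u ^ 6 * w ^ 11 + 4411611176960 * u ^ 5 * w ^ 12 +
       852732588032 * u ^ 4 * w ^ 13 + 122202214400 * u ^ 3 * w ^ 14 +
       12243027968 * u ^ 2 * w ^ 15 + 765901952 * u * w ^ 16 +
       22526528 * w ^ 17"
    unfolding partition_poly_17_4 binom w_def by algebra
  have "0 < (2 * real (17 choose 4))\<^sup>2 * (1 + u\<^sup>2) ^ 17 - 2 ^ 17 * partition_poly 17 4 u ^ 2"
    unfolding certificate using assms(1) w by (intro add_pos_pos mult_pos_pos zero_less_power) simp_all
  then show ?thesis
    by (simp only: diff_gt_0_iff_gt)
qed

lemma boundary_inequality_17_4:
  "2 ^ 17 * partition_poly 17 4 (1 / 10) ^ 2 < (2 * real (17 choose 4))\<^sup>2"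
  unfolding partition_poly_17_4 by (simp add: binomial_fact' fact_reduce power_divide)

theorem lemma4p4:
  fixes d p :: nat
  assumes "(d, p) \<in> {(6,1), (10,2), (13,3), (14,3), (17,4)}"
  shows "zstar d p \<in> Kset p
         \<and> (\<forall>x\<in>Kset p. x \<noteq> zstar d p \<longrightarrow> phi d p x < phi d p (zstar d p))
         \<and> zstar d p \<in> interior_pt p (Kset p)"
proof -
  have dp: "2 * p \<le> d" "0 < d"
    using assms by auto
  have key: "2 ^ d * partition_poly d p u ^ 2 < (2 * real (d choose p))\<^sup>2 * (1 + u\<^sup>2) ^ d"
    if "0 < u" "u \<noteq> 1" for u :: real
    using assms key_inequality_6_1[OF that] key_inequality_10_2[OF that] key_inequality_13_3[OF that]
      key_inequality_14_3[OF that] key_inequality_17_4[OF that]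
    by auto
  have boundary: "2 ^ d * partition_poly d p (1 / 10) ^ 2 < (2 * real (d choose p))\<^sup>2"
    using assms boundary_inequality_6_1 boundary_inequality_10_2 boundary_inequality_13_3
      boundary_inequality_14_3 boundary_inequality_17_4
    by auto
  show ?thesis
    using phi_less_phi_zstar[OF dp key _ boundary] zstar_in_Kset[OF dp(1)] zstar_interior[OF dp(1)]
    by auto
qed

end
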